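(* Let $(D,\prec,\succ,\alpha)$ be a Hom-dendriform algebra, $(V,\prec_l,\succ_l,\prec_r,\succ_r,\beta)$ a representation of it, and $T:V\to D$ a relative averaging operator with respect to this representation. Define on $V$: $u\prec^T_\vdash v=T(u)\prec_l v$, $u\prec^T_\dashv v=u\prec_r T(v)$, $u\succ^T_\vdash v=T(u)\succ_l v$, $u\succ^T_\dashv v=u\succ_r T(v)$ for $u,v\in V$. Then $(V,\prec^T_\vdash,\prec^T_\dashv,\succ^T_\vdash,\succ^T_\dashv,\beta)$ is a Hom-quadri-dendriform algebra. Moreover, $T$ is a homomorphism from it to the Hom-dendriform algebra $(D,\prec,\succ,\alpha)$, i.e. $T(u\prec^T_\vdash v)=T(u\prec^T_\dashv v)=Tu\prec Tv$, $T(u\succ^T_\vdash v)=T(u\succ^T_\dashv v)=Tu\succ Tv$ for all $u,v\in V$, and $T\circ\beta=\alpha\circ T$.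
   Context: All vector spaces are over a field of characteristic zero. A Hom-dendriform algebra is $(D,\prec,\succ,\alpha)$ with $\prec,\succ$ bilinear on $D$ and $\alpha:D\to D$ linear such that for all $x,y,z$: $\alpha(x)\prec(y\prec z+y\succ z)=(x\prec y)\prec\alpha(z)$; $\alpha(x)\succ(y\prec z)=(x\succ y)\prec\alpha(z)$; $\alpha(x)\succ(y\succ z)=(x\prec y+x\succ y)\succ\alpha(z)$. A representation of $(D,\prec,\succ,\alpha)$ is a vector space $V$ with a linear map $\beta:V\to V$ and bilinear maps $\prec_l,\succ_l:D\times V\to V$, $\prec_r,\succ_r:V\times D\to V$ such that for all $x,y\in D$, $m\in V$: $(x\prec y)\prec_l\beta(m)=\alpha(x)\prec_l(y\prec_l m+y\succ_l m)$; $(x\succ y)\prec_l\beta(m)=\alpha(x)\succ_l(y\prec_l m)$; $\alpha(x)\succ_l(y\succ_l m)=(x\prec y+x\succ y)\succ_l\beta(m)$; $\beta(m)\prec_r(x\prec y+x\succ y)=(m\prec_r x)\prec_r\alpha(y)$; $\beta(m)\succ_r(x\prec y)=(m\succ_r x)\prec_r\alpha(y)$; $(m\prec_r x+m\succ_r x)\succ_r\alpha(y)=\beta(m)\succ_r(x\succ y)$; $(x\prec_l m)\prec_r\alpha(y)=\alpha(x)\prec_l(m\prec_r y+m\succ_r y)$; $(x\succ_l m)\prec_r\alpha(y)=\alpha(x)\succ_l(m\prec_r y)$; $(x\prec_l m+x\succ_l m)\succ_r\alpha(y)=\alpha(x)\succ_l(m\succ_r y)$. A relative averaging operator is a linear map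 $T:V\to D$ with $Tu\prec Tv=T(Tu\prec_l v)=T(u\prec_r Tv)$, $Tu\succ Tv=T(Tu\succ_l v)=T(u\succ_r Tv)$ for all $u,v\in V$, and $T\circ\beta=\alpha\circ T$. A Hom-quadri-dendriform algebra is a tuple $(E,\prec_\vdash,\prec_\dashv,\succ_\vdash,\succ_\dashv,\gamma)$ with four bilinear operations on $E$ and $\gamma:E\to E$ linear such that for all $x,y,z\in E$: (Q1) $(x\prec_\vdash y)\prec_\vdash\gamma(z)=(x\prec_\dashv y)\prec_\vdash\gamma(z)=\gamma(x)\prec_\vdash(y\prec_\vdash z+y\succ_\vdash z)$; (Q2) $(x\succ_\vdash y)\prec_\vdash\gamma(z)=(x\succ_\dashv y)\prec_\vdash\gamma(z)=\gamma(x)\succ_\vdash(y\prec_\vdash z)$; (Q3) $\gamma(x)\succ_\vdash(y\succ_\vdash z)=(x\prec_\vdash y+x\succ_\vdash y)\succ_\vdash\gamma(z)=(x\prec_\dashv y+x\succ_\dashv y)\succ_\vdash\gamma(z)$; (Q4) $\gamma(x)\succ_\vdash(y\succ_\vdash z)=(x\prec_\dashv y+x\succ_\vdash y)\succ_\vdash\gamma(z)=(x\prec_\vdash y+x\succ_\dashv y)\succ_\vdash\gamma(z)$; (Q5) $(x\prec_\vdash y)\prec_\dashv\gamma(z)=\gamma(x)\prec_\vdash(y\prec_\dashv z+y\succ_\dashv z)$; (Q6) $(x\succ_\vdash y)\prec_\dashv\gamma(z)=\gamma(x)\succ_\vdash(y\prec_\dashv z)$; (Q7) $\gamma(x)\succ_\vdash(y\succ_\dashv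 z)=(x\prec_\vdash y+x\succ_\vdash y)\succ_\dashv\gamma(z)$; (Q8) $(x\prec_\dashv y)\prec_\dashv\gamma(z)=\gamma(x)\prec_\dashv(y\prec_\vdash z+y\succ_\vdash z)=\gamma(x)\prec_\dashv(y\prec_\dashv z+y\succ_\dashv z)$; (Q9) $(x\prec_\dashv y)\prec_\dashv\gamma(z)=\gamma(x)\prec_\dashv(y\prec_\vdash z+y\succ_\dashv z)=\gamma(x)\prec_\dashv(y\prec_\dashv z+y\succ_\vdash z)$; (Q10) $(x\succ_\dashv y)\prec_\dashv\gamma(z)=\gamma(x)\succ_\dashv(y\prec_\vdash z)=\gamma(x)\succ_\dashv(y\prec_\dashv z)$; (Q11) $\gamma(x)\succ_\dashv(y\succ_\vdash z)=\gamma(x)\succ_\dashv(y\succ_\dashv z)=(x\prec_\dashv y+x\succ_\dashv y)\succ_\dashv\gamma(z)$. *)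

theory Defs
  imports Complex_Main
begin

definition bilinear_map ::
  "('k::field \<Rightarrow> 'a::ab_group_add \<Rightarrow> 'a) \<Rightarrow> ('k \<Rightarrow> 'b::ab_group_add \<Rightarrow> 'b) \<Rightarrow>
   ('k \<Rightarrow> 'c::ab_group_add \<Rightarrow> 'c) \<Rightarrow> ('a \<Rightarrow> 'b \<Rightarrow> 'c) \<Rightarrow> bool" where
  "bilinear_map sA sB sC f \<longleftrightarrow>
     (\<forall>x. Vector_Spaces.linear sB sC (f x)) \<and> (\<forall>y. Vector_Spaces.linear sA sC (\<lambda>x. f x y))"

definition hom_dendriform_algebra ::
  "('k::field \<Rightarrow> 'd::ab_group_add \<Rightarrow> 'd) \<Rightarrow> ('d \<Rightarrow> 'd \<Rightarrow> 'd) \<Rightarrow> ('d \<Rightarrow> 'd \<Rightarrow> 'd) \<Rightarrow>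
   ('d \<Rightarrow> 'd) \<Rightarrow> bool" where
  "hom_dendriform_algebra s prec succ \<alpha> \<longleftrightarrow>
     vector_space s \<and> bilinear_map s s s prec \<and> bilinear_map s s s succ \<and>
     Vector_Spaces.linear s s \<alpha> \<and>
     (\<forall>x y z. prec (\<alpha> x) (prec y z + succ y z) = prec (prec x y) (\<alpha> z)) \<and>
     (\<forall>x y z. succ (\<alpha> x) (prec y z) = prec (succ x y) (\<alpha> z)) \<and>
     (\<forall>x y z. succ (\<alpha> x) (succ y z) = succ (prec x y + succ x y) (\<alpha> z))"

definition hom_dendriform_rep ::
  "('k::field \<Rightarrow> 'd::ab_group_add \<Rightarrow> 'd) \<Rightarrow> ('d \<Rightarrow> 'd \<Rightarrow> 'd) \<Rightarrow> ('d \<Rightarrow> 'd \<Rightarrow> 'd) \<Rightarrow>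
   ('d \<Rightarrow> 'd) \<Rightarrow> ('k \<Rightarrow> 'v::ab_group_add \<Rightarrow> 'v) \<Rightarrow>
   ('d \<Rightarrow> 'v \<Rightarrow> 'v) \<Rightarrow> ('d \<Rightarrow> 'v \<Rightarrow> 'v) \<Rightarrow> ('v \<Rightarrow> 'd \<Rightarrow> 'v) \<Rightarrow> ('v \<Rightarrow> 'd \<Rightarrow> 'v) \<Rightarrow>
   ('v \<Rightarrow> 'v) \<Rightarrow> bool" where
  "hom_dendriform_rep sD prec succ \<alpha> sV precl succl precr succr \<beta> \<longleftrightarrow>
     vector_space sV \<and> Vector_Spaces.linear sV sV \<beta> \<and>
     bilinear_map sD sV sV precl \<and> bilinear_map sD sV sV succl \<and>
     bilinear_map sV sD sV precr \<and> bilinear_map sV sD sV succr \<and>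
     (\<forall>x y m. precl (prec x y) (\<beta> m) = precl (\<alpha> x) (precl y m + succl y m)) \<and>
     (\<forall>x y m. precl (succ x y) (\<beta> m) = succl (\<alpha> x) (precl y m)) \<and>
     (\<forall>x y m. succl (\<alpha> x) (succl y m) = succl (prec x y + succ x y) (\<beta> m)) \<and>
     (\<forall>x y m. precr (\<beta> m) (prec x y + succ x y) = precr (precr m x) (\<alpha> y)) \<and>
     (\<forall>x y m. succr (\<beta> m) (prec x y) = precr (succr m x) (\<alpha> y)) \<and>
     (\<forall>x y m. succr (precr m x + succr m x) (\<alpha> y) = succr (\<beta> m) (succ x y)) \<and>
     (\<forall>x y m. precr (precl x m) (\<alpha> y) = precl (\<alpha> x) (precr m y + succr m y)) \<and>
     (\<forall>x y m. precr (succl x m) (\<alpha> y) = succl (\<alpha> x) (precr m y)) \<and>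
     (\<forall>x y m. succr (precl x m + succl x m) (\<alpha> y) = succl (\<alpha> x) (succr m y))"

definition relative_averaging_operator ::
  "('k::field \<Rightarrow> 'd::ab_group_add \<Rightarrow> 'd) \<Rightarrow> ('d \<Rightarrow> 'd \<Rightarrow> 'd) \<Rightarrow> ('d \<Rightarrow> 'd \<Rightarrow> 'd) \<Rightarrow>
   ('d \<Rightarrow> 'd) \<Rightarrow> ('k \<Rightarrow> 'v::ab_group_add \<Rightarrow> 'v) \<Rightarrow>
   ('d \<Rightarrow> 'v \<Rightarrow> 'v) \<Rightarrow> ('d \<Rightarrow> 'v \<Rightarrow> 'v) \<Rightarrow> ('v \<Rightarrow> 'd \<Rightarrow> 'v) \<Rightarrow> ('v \<Rightarrow> 'd \<Rightarrow> 'v) \<Rightarrow>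
   ('v \<Rightarrow> 'v) \<Rightarrow> ('v \<Rightarrow> 'd) \<Rightarrow> bool" where
  "relative_averaging_operator sD prec succ \<alpha> sV precl succl precr succr \<beta> T \<longleftrightarrow>
     Vector_Spaces.linear sV sD T \<and>
     (\<forall>u v. prec (T u) (T v) = T (precl (T u) v) \<and> prec (T u) (T v) = T (precr u (T v))) \<and>
     (\<forall>u v. succ (T u) (T v) = T (succl (T u) v) \<and> succ (T u) (T v) = T (succr u (T v))) \<and>
     T \<circ> \<beta> = \<alpha> \<circ> T"

definition hom_quadri_dendriform_algebra ::
  "('k::field \<Rightarrow> 'e::ab_group_add \<Rightarrow> 'e) \<Rightarrow> ('e \<Rightarrow> 'e \<Rightarrow> 'e) \<Rightarrow> ('e \<Rightarrow> 'e \<Rightarrow> 'e) \<Rightarrow>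
   ('e \<Rightarrow> 'e \<Rightarrow> 'e) \<Rightarrow> ('e \<Rightarrow> 'e \<Rightarrow> 'e) \<Rightarrow> ('e \<Rightarrow> 'e) \<Rightarrow> bool" where
  "hom_quadri_dendriform_algebra s pv pd sv sd \<gamma> \<longleftrightarrow>
     vector_space s \<and> bilinear_map s s s pv \<and> bilinear_map s s s pd \<and>
     bilinear_map s s s sv \<and> bilinear_map s s s sd \<and> Vector_Spaces.linear s s \<gamma> \<and>
     (\<forall>x y z. pv (pv x y) (\<gamma> z) = pv (pd x y) (\<gamma> z) \<and>
              pv (pd x y) (\<gamma> z) = pv (\<gamma> x) (pv y z + sv y z)) \<and>
     (\<forall>x y z. pv (sv x y) (\<gamma> z) = pv (sd x y) (\<gamma> z) \<and>
              pv (sd x y) (\<gamma> z) = sv (\<gamma> x) (pv y z)) \<and>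
     (\<forall>x y z. sv (\<gamma> x) (sv y z) = sv (pv x y + sv x y) (\<gamma> z) \<and>
              sv (pv x y + sv x y) (\<gamma> z) = sv (pd x y + sd x y) (\<gamma> z)) \<and>
     (\<forall>x y z. sv (\<gamma> x) (sv y z) = sv (pd x y + sv x y) (\<gamma> z) \<and>
              sv (pd x y + sv x y) (\<gamma> z) = sv (pv x y + sd x y) (\<gamma> z)) \<and>
     (\<forall>x y z. pd (pv x y) (\<gamma> z) = pv (\<gamma> x) (pd y z + sd y z)) \<and>
     (\<forall>x y z. pd (sv x y) (\<gamma> z) = sv (\<gamma> x) (pd y z)) \<and>
     (\<forall>x y z. sv (\<gamma> x) (sd y z) = sd (pv x y + sv x y) (\<gamma> z)) \<and>
     (\<forall>x y z. pd (pd x y) (\<gamma> z) = pd (\<gamma> x) (pv y z + sv y z) \<and>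
              pd (\<gamma> x) (pv y z + sv y z) = pd (\<gamma> x) (pd y z + sd y z)) \<and>
     (\<forall>x y z. pd (pd x y) (\<gamma> z) = pd (\<gamma> x) (pv y z + sd y z) \<and>
              pd (\<gamma> x) (pv y z + sd y z) = pd (\<gamma> x) (pd y z + sv y z)) \<and>
     (\<forall>x y z. pd (sd x y) (\<gamma> z) = sd (\<gamma> x) (pv y z) \<and>
              sd (\<gamma> x) (pv y z) = sd (\<gamma> x) (pd y z)) \<and>
     (\<forall>x y z. sd (\<gamma> x) (sv y z) = sd (\<gamma> x) (sd y z) \<and>
              sd (\<gamma> x) (sd y z) = sd (pd x y + sd x y) (\<gamma> z))"

end

theory Submission
  imports Defs
begin

(* Each derived product is a representation operation evaluated at a T-image, and T sends both
   u \<prec>\<^sup>T\<^sub>\<turnstile> v and u \<prec>\<^sup>T\<^sub>\<stileturn> v to Tu \<prec> Tv (likewise for \<succ>). Hence in a composite product the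
   inner \<turnstile>/\<stileturn> choice is invisible to the outer one, and every quadri-dendriform axiom is a
   representation axiom instantiated at x = Tu, y = Tv, with \<alpha>(Tu) rewritten as T(\<beta> u). *)

lemma bilinear_map_compose_left:
  assumes "bilinear_map sA sB sC f" and "Vector_Spaces.linear sA' sA g"
  shows "bilinear_map sA' sB sC (\<lambda>x y. f (g x) y)"
proof -
  have "Vector_Spaces.linear sA' sC ((\<lambda>x. f x y) \<circ> g)" for y
    using assms by (intro Vector_Spaces.linear_compose) (auto simp: bilinear_map_def)
  then show ?thesis
    using assms(1) by (simp add: bilinear_map_def comp_def)
qed

lemma bilinear_map_compose_right:
  assumes "bilinear_map sA sB sC f" and "Vector_Spaces.linear sB' sB g"
  shows "bilinear_map sA sB' sC (\<lambda>x y. f x (g y))"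
proof -
  have "Vector_Spaces.linear sB' sC (f x \<circ> g)" for x
    using assms by (intro Vector_Spaces.linear_compose) (auto simp: bilinear_map_def)
  then show ?thesis
    using assms(1) by (simp add: bilinear_map_def comp_def)
qed

lemma relative_averaging_operatorD:
  assumes "relative_averaging_operator sD prec succ \<alpha> sV precl succl precr succr \<beta> T"
  shows "Vector_Spaces.linear sV sD T"
    and "T (precl (T u) v) = prec (T u) (T v)" and "T (precr u (T v)) = prec (T u) (T v)"
    and "T (succl (T u) v) = succ (T u) (T v)" and "T (succr u (T v)) = succ (T u) (T v)"
    and "T (\<beta> u) = \<alpha> (T u)"
  using assms unfolding relative_averaging_operator_def by (metis comp_apply)+

lemma hom_dendriform_repD:
  assumes "hom_dendriform_rep sD prec succ \<alpha> sV precl succl precr succr \<beta>"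
  shows "vector_space sV" and "Vector_Spaces.linear sV sV \<beta>"
    and "bilinear_map sD sV sV precl" and "bilinear_map sD sV sV succl"
    and "bilinear_map sV sD sV precr" and "bilinear_map sV sD sV succr"
    and "precl (prec x y) (\<beta> m) = precl (\<alpha> x) (precl y m + succl y m)"
    and "precl (succ x y) (\<beta> m) = succl (\<alpha> x) (precl y m)"
    and "succl (\<alpha> x) (succl y m) = succl (prec x y + succ x y) (\<beta> m)"
    and "precr (\<beta> m) (prec x y + succ x y) = precr (precr m x) (\<alpha> y)"
    and "succr (\<beta> m) (prec x y) = precr (succr m x) (\<alpha> y)"
    and "succr (precr m x + succr m x) (\<alpha> y) = succr (\<beta> m) (succ x y)"
    and "precr (precl x m) (\<alpha> y) = precl (\<alpha> x) (precr m y + succr m y)"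
    and "precr (succl x m) (\<alpha> y) = succl (\<alpha> x) (precr m y)"
    and "succr (precl x m + succl x m) (\<alpha> y) = succl (\<alpha> x) (succr m y)"
  using assms unfolding hom_dendriform_rep_def by meson+

lemma hom_quadri_dendriform_algebra_relative_averaging:
  assumes rep: "hom_dendriform_rep sD prec succ \<alpha> sV precl succl precr succr \<beta>"
    and T: "relative_averaging_operator sD prec succ \<alpha> sV precl succl precr succr \<beta> T"
  shows "hom_quadri_dendriform_algebra sV
           (\<lambda>u v. precl (T u) v) (\<lambda>u v. precr u (T v))
           (\<lambda>u v. succl (T u) v) (\<lambda>u v. succr u (T v)) \<beta>"
proof -
  note linT = relative_averaging_operatorD(1)[OF T]
  have T_add: "T (u + v) = T u + T v" for u v
    using linT by (simp add: Vector_Spaces.linear_iff)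
  show ?thesis
    unfolding hom_quadri_dendriform_algebra_def
    using hom_dendriform_repD(1,2)[OF rep]
      bilinear_map_compose_left[OF hom_dendriform_repD(3)[OF rep] linT]
      bilinear_map_compose_left[OF hom_dendriform_repD(4)[OF rep] linT]
      bilinear_map_compose_right[OF hom_dendriform_repD(5)[OF rep] linT]
      bilinear_map_compose_right[OF hom_dendriform_repD(6)[OF rep] linT]
    by (simp add: T_add relative_averaging_operatorD(2-6)[OF T] hom_dendriform_repD(7-15)[OF rep])
qed

theorem proposition3p11:
  fixes sD :: "'k::field_char_0 \<Rightarrow> 'd::ab_group_add \<Rightarrow> 'd"
    and sV :: "'k \<Rightarrow> 'v::ab_group_add \<Rightarrow> 'v"
    and prec succ :: "'d \<Rightarrow> 'd \<Rightarrow> 'd" and \<alpha> :: "'d \<Rightarrow> 'd"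
    and precl succl :: "'d \<Rightarrow> 'v \<Rightarrow> 'v" and precr succr :: "'v \<Rightarrow> 'd \<Rightarrow> 'v"
    and \<beta> :: "'v \<Rightarrow> 'v" and T :: "'v \<Rightarrow> 'd"
  assumes "hom_dendriform_algebra sD prec succ \<alpha>"
    and "hom_dendriform_rep sD prec succ \<alpha> sV precl succl precr succr \<beta>"
    and "relative_averaging_operator sD prec succ \<alpha> sV precl succl precr succr \<beta> T"
  shows "hom_quadri_dendriform_algebra sV
           (\<lambda>u v. precl (T u) v) (\<lambda>u v. precr u (T v))
           (\<lambda>u v. succl (T u) v) (\<lambda>u v. succr u (T v)) \<beta>
       \<and> (\<forall>u v. T (precl (T u) v) = prec (T u) (T v) \<and> T (precr u (T v)) = prec (T u) (T v))
       \<and> (\<forall>u v. T (succl (T u) v) = succ (T u) (T v) \<and> T (succr u (T v)) = succ (T u) (T v))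
       \<and> T \<circ> \<beta> = \<alpha> \<circ> T"
  using hom_quadri_dendriform_algebra_relative_averaging[OF assms(2,3)]
    relative_averaging_operatorD(2-6)[OF assms(3)]
  by (auto simp: fun_eq_iff)

end
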